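(* Every bipartite graph $H=(V,F)$ with no connected component consisting of a single edge admits a partial edge colouring with $4$ colours such that all edges of $H$ are satisfied and every vertex of $V$ is incident with a uniquely coloured edge.
   Context: For an edge $e=uv$, $E[e]$ is the set of edges incident with $u$ or $v$ and $E(e)=E[e]\setminus\{e\}$. In a partial edge colouring (not all edges need be coloured), a colour $\alpha$ is unique for $e$ if $\alpha$ appears on some edge $e'\in E(e)$ and on no other edge of $E[e]\setminus\{e'\}$; $e$ is satisfied if such a colour exists. A vertex $v$ is incident with a uniquely coloured edge if some coloured edge incident with $v$ has a colour appearing on no other edge incident with $v$. (Isolated vertices are not excluded by the hypothesis; the claim is as stated for every vertex of $V$, where vertices of degree $0$ may be assumed absent since $H$ is given via its edges—more precisely, the claim applies to every vertex of positive degree, and $V$ is assumed to have no isolated vertices.) *)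

theory Defs
  imports Main
begin

definition simple_graph :: "'a set \<Rightarrow> 'a set set \<Rightarrow> bool" where
  "simple_graph V F \<longleftrightarrow> finite V \<and> (\<forall>e\<in>F. e \<subseteq> V \<and> card e = 2)"

definition bipartite :: "'a set \<Rightarrow> 'a set set \<Rightarrow> bool" where
  "bipartite V F \<longleftrightarrow> (\<exists>A B. A \<inter> B = {} \<and> A \<union> B = V \<and>
      (\<forall>e\<in>F. card (e \<inter> A) = 1 \<and> card (e \<inter> B) = 1))"

definition has_single_edge_component :: "'a set set \<Rightarrow> bool" where
  "has_single_edge_component F \<longleftrightarrow> (\<exists>e\<in>F. \<forall>e'\<in>F. e' \<inter> e \<noteq> {} \<longrightarrow> e' = e)"

definition closed_nbhd :: "'a set set \<Rightarrow> 'a set \<Rightarrow> 'a set set" where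
  "closed_nbhd F e = {e'\<in>F. e' \<inter> e \<noteq> {}}"

definition open_nbhd :: "'a set set \<Rightarrow> 'a set \<Rightarrow> 'a set set" where
  "open_nbhd F e = closed_nbhd F e - {e}"

text \<open>A partial edge colouring with colours from C: None means uncoloured.\<close>
definition partial_edge_colouring ::
  "'a set set \<Rightarrow> 'c set \<Rightarrow> ('a set \<Rightarrow> 'c option) \<Rightarrow> bool" where
  "partial_edge_colouring F C col \<longleftrightarrow> (\<forall>e\<in>F. \<forall>\<alpha>. col e = Some \<alpha> \<longrightarrow> \<alpha> \<in> C)"

definition unique_colour_for ::
  "'a set set \<Rightarrow> ('a set \<Rightarrow> 'c option) \<Rightarrow> 'a set \<Rightarrow> 'c \<Rightarrow> bool" where
  "unique_colour_for F col e \<alpha> \<longleftrightarrow>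
     (\<exists>e'\<in>open_nbhd F e. col e' = Some \<alpha> \<and>
        (\<forall>e''\<in>closed_nbhd F e - {e'}. col e'' \<noteq> Some \<alpha>))"

definition satisfied :: "'a set set \<Rightarrow> ('a set \<Rightarrow> 'c option) \<Rightarrow> 'a set \<Rightarrow> bool" where
  "satisfied F col e \<longleftrightarrow> (\<exists>\<alpha>. unique_colour_for F col e \<alpha>)"

definition incident_unique :: "'a set set \<Rightarrow> ('a set \<Rightarrow> 'c option) \<Rightarrow> 'a \<Rightarrow> bool" where
  "incident_unique F col v \<longleftrightarrow>
     (\<exists>e\<in>F. v \<in> e \<and> col e \<noteq> None \<and>
        (\<forall>e'\<in>F. v \<in> e' \<and> e' \<noteq> e \<longrightarrow> col e' \<noteq> col e))"

end

theory Submission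
  imports Defs
begin

(*
  Treat each component separately. Root it at a vertex r having a neighbour h (the hub) of
  degree at least two, fix a neighbour w of h other than r, take a breadth-first spanning tree
  and colour only its edges, each by a colour determined by its lower endpoint. As the graph is
  bipartite, every edge xy joins consecutive levels, say depth y = depth x + 1. If x is not the
  root, the tree edge from x up to its parent has a unique colour in E[xy] as soon as the colours
  on levels d, d+1, d+2 are pairwise distinct, which the pattern 4, 1, 2, 4, 1, 2, ... ensures
  from level 3 on; the same edge makes x incident with a uniquely coloured edge.

  Near the root: rh gets colour 1 and the other root edges 3, so r sees 1 uniquely and every
  root edge other than rh is satisfied by 1; hw gets 2, which satisfies rh, and the other
  children of h get 3. A vertex of level 2 hangs from h only if it is w or has no other
  neighbour on level 1, so a level-2 vertex coloured 3 is adjacent to no level-1 vertex x other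
  than h, and colour 3 on rx stays unique for the edges below x.
*)

locale bipartite_graph =
  fixes V :: "'a set" and F :: "'a set set" and A :: "'a set"
  assumes edge_two_vertices: "e \<in> F \<Longrightarrow> e \<subseteq> V \<and> card e = 2"
    and edge_crosses: "e \<in> F \<Longrightarrow> card (e \<inter> A) = 1"
begin

definition adj :: "'a \<Rightarrow> 'a \<Rightarrow> bool" where
  "adj u v \<longleftrightarrow> {u, v} \<in> F"

lemma adj_sym: "adj u v \<Longrightarrow> adj v u"
  unfolding adj_def by (simp add: insert_commute)

lemma adj_neq: "adj u v \<Longrightarrow> u \<noteq> v"
  unfolding adj_def using edge_two_vertices by fastforce

lemma adj_in_V: "adj u v \<Longrightarrow> u \<in> V \<and> v \<in> V"
  unfolding adj_def using edge_two_vertices by blast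

lemma adj_side: "adj u v \<Longrightarrow> u \<in> A \<longleftrightarrow> v \<notin> A"
  using edge_crosses[of "{u, v}"] adj_neq[of u v] unfolding adj_def
  by (cases "u \<in> A"; cases "v \<in> A") auto

lemma edge_adj: "e \<in> F \<Longrightarrow> \<exists>u v. e = {u, v} \<and> adj u v"
  using edge_two_vertices by (metis adj_def card_2_iff)

lemma reachable_sym: "adj\<^sup>*\<^sup>* x y \<Longrightarrow> adj\<^sup>*\<^sup>* y x"
  using symp_rtranclp[of adj] adj_sym by (metis sympD sympI)

lemma walk_parity: "(adj ^^ n) u v \<Longrightarrow> (u \<in> A \<longleftrightarrow> v \<in> A) \<longleftrightarrow> even n"
proof (induction n arbitrary: v)
  case (Suc n)
  then obtain y where "(adj ^^ n) u y" "adj y v" by (meson relpowp_Suc_E)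
  then show ?case using Suc.IH adj_side by fastforce
qed simp

definition dist :: "'a \<Rightarrow> 'a \<Rightarrow> nat" where
  "dist u v = (LEAST n. (adj ^^ n) u v)"

lemma dist_walk:
  assumes "adj\<^sup>*\<^sup>* u v"
  shows "(adj ^^ dist u v) u v"
proof -
  obtain n where "(adj ^^ n) u v" using rtranclp_imp_relpowp[OF assms] by blast
  then show ?thesis unfolding dist_def by (rule LeastI)
qed

lemma dist_le: "(adj ^^ n) u v \<Longrightarrow> dist u v \<le> n"
  unfolding dist_def by (rule Least_le)

lemma dist_eq_0_iff: "adj\<^sup>*\<^sup>* u v \<Longrightarrow> dist u v = 0 \<longleftrightarrow> v = u"
  using dist_walk dist_le[of 0 u v] by fastforce

lemma dist_adj:
  assumes "adj\<^sup>*\<^sup>* u x" and "adj x y"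
  shows "dist u y = Suc (dist u x) \<or> dist u x = Suc (dist u y)"
proof -
  have wx: "(adj ^^ dist u x) u x" using assms(1) by (rule dist_walk)
  have wy: "(adj ^^ dist u y) u y" using assms by (intro dist_walk) auto
  have "dist u y \<le> Suc (dist u x)" using wx assms(2) by (intro dist_le relpowp_Suc_I)
  moreover have "dist u x \<le> Suc (dist u y)"
    using wy adj_sym[OF assms(2)] by (intro dist_le relpowp_Suc_I)
  moreover have "even (dist u x) \<noteq> even (dist u y)"
    using walk_parity[OF wx] walk_parity[OF wy] adj_side[OF assms(2)] by blast
  then have "dist u x \<noteq> dist u y" by metis
  ultimately show ?thesis by linarith
qed

lemma dist_pred:
  assumes "adj\<^sup>*\<^sup>* u x" and "0 < dist u x"
  shows "\<exists>w. adj w x \<and> Suc (dist u w) = dist u x"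
proof -
  obtain m where m: "dist u x = Suc m" using assms(2) gr0_implies_Suc by blast
  then obtain w where w: "(adj ^^ m) u w" "adj w x"
    using dist_walk[OF assms(1)] by (metis relpowp_Suc_E)
  have "dist u w \<le> m" using w(1) by (rule dist_le)
  moreover have "(adj ^^ dist u w) u w" using w(1) by (intro dist_walk relpowp_imp_rtranclp)
  then have "(adj ^^ Suc (dist u w)) u x" using w(2) by (rule relpowp_Suc_I)
  then have "dist u x \<le> Suc (dist u w)" by (rule dist_le)
  ultimately show ?thesis using w(2) m by (intro exI[of _ w]) auto
qed

end

locale bipartite_graph_without_K2 = bipartite_graph +
  assumes no_single_edge_component: "\<not> has_single_edge_component F"
    and no_isolated_vertex: "\<forall>v\<in>V. \<exists>e\<in>F. v \<in> e"
begin

definition good_root :: "'a \<Rightarrow> bool" where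
  "good_root r \<longleftrightarrow> (\<exists>c w. adj r c \<and> adj c w \<and> w \<noteq> r)"

lemma adj_extends:
  assumes xy: "adj x y"
  shows "(\<exists>z. adj x z \<and> z \<noteq> y) \<or> (\<exists>z. adj y z \<and> z \<noteq> x)"
proof -
  obtain e' where e': "e' \<in> F" "e' \<inter> {x, y} \<noteq> {}" "e' \<noteq> {x, y}"
    using xy no_single_edge_component unfolding has_single_edge_component_def adj_def by blast
  then obtain a b where ab: "e' = {a, b}" "adj a b" using edge_adj by blast
  have "\<exists>p q. e' = {p, q} \<and> adj p q \<and> p \<in> {x, y}"
  proof (cases "a \<in> {x, y}")
    case True
    then show ?thesis using ab by blast
  next
    case False
    then have "b \<in> {x, y}" using e'(2) ab(1) by blast
    moreover have "e' = {b, a}" using ab(1) by (simp add: insert_commute)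
    ultimately show ?thesis using adj_sym[OF ab(2)] by blast
  qed
  then obtain p q where pq: "e' = {p, q}" "adj p q" "p \<in> {x, y}" by blast
  have "(p = x \<and> q \<noteq> y) \<or> (p = y \<and> q \<noteq> x)"
    using pq e'(3) by (cases "p = x") (auto simp: insert_commute)
  then show ?thesis using pq(2) by blast
qed

lemma good_root_nearby:
  assumes "x \<in> V"
  shows "\<exists>r. good_root r \<and> adj\<^sup>*\<^sup>* x r"
proof -
  obtain e where "e \<in> F" "x \<in> e" using assms no_isolated_vertex by blast
  then obtain u v where "e = {u, v}" "adj u v" using edge_adj by blast
  then obtain y where xy: "adj x y" using \<open>x \<in> e\<close> adj_sym by blast
  then have "good_root y \<or> good_root x"
    using adj_extends adj_sym unfolding good_root_def by blast
  then show ?thesis using xy by blast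
qed

definition root :: "'a \<Rightarrow> 'a" where
  "root x = (SOME r. good_root r \<and> adj\<^sup>*\<^sup>* x r)"

definition depth :: "'a \<Rightarrow> nat" where
  "depth x = dist (root x) x"

lemma root_good_reachable: "x \<in> V \<Longrightarrow> good_root (root x) \<and> adj\<^sup>*\<^sup>* x (root x)"
  unfolding root_def by (rule someI_ex) (rule good_root_nearby)

lemma reachable_from_root: "x \<in> V \<Longrightarrow> adj\<^sup>*\<^sup>* (root x) x"
  using root_good_reachable reachable_sym by blast

lemma root_cong:
  assumes "adj\<^sup>*\<^sup>* x y"
  shows "root x = root y"
proof -
  have "adj\<^sup>*\<^sup>* x r \<longleftrightarrow> adj\<^sup>*\<^sup>* y r" for r
    using assms reachable_sym rtranclp_trans by metis
  then show ?thesis unfolding root_def by simp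
qed

lemma root_adj: "adj x y \<Longrightarrow> root x = root y"
  by (rule root_cong) (rule r_into_rtranclp)

lemma root_root: "x \<in> V \<Longrightarrow> root (root x) = root x"
  using root_good_reachable root_cong by (metis reachable_sym)

lemma depth_eq_0_iff: "x \<in> V \<Longrightarrow> depth x = 0 \<longleftrightarrow> x = root x"
  unfolding depth_def using dist_eq_0_iff[OF reachable_from_root] by blast

lemma depth_adj:
  assumes "adj x y"
  shows "depth y = Suc (depth x) \<or> depth x = Suc (depth y)"
proof -
  have "adj\<^sup>*\<^sup>* (root x) x" using assms adj_in_V reachable_from_root by blast
  then show ?thesis unfolding depth_def using dist_adj assms root_adj[OF assms] by simp
qed

lemma depth_pred:
  assumes "x \<in> V" and "0 < depth x"
  shows "\<exists>u. adj u x \<and> Suc (depth u) = depth x"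
proof -
  obtain u where u: "adj u x" "Suc (dist (root x) u) = depth x"
    using dist_pred[OF reachable_from_root[OF assms(1)]] assms(2) unfolding depth_def by blast
  then have "Suc (depth u) = depth x" unfolding depth_def using root_adj by simp
  then show ?thesis using u(1) by blast
qed

definition hub :: "'a \<Rightarrow> 'a" where
  "hub r = (SOME c. adj r c \<and> (\<exists>w. adj c w \<and> w \<noteq> r))"

definition hub_child :: "'a \<Rightarrow> 'a" where
  "hub_child r = (SOME w. adj (hub r) w \<and> w \<noteq> r)"

lemma root_hub_facts:
  assumes "x \<in> V"
  defines "r \<equiv> root x"
  shows "depth r = 0" "root r = r"
    and "adj r (hub r)" "depth (hub r) = 1" "root (hub r) = r"
    and "adj (hub r) (hub_child r)" "hub_child r \<noteq> r"
    and "depth (hub_child r) = 2" "root (hub_child r) = r"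
proof -
  have "good_root r" using root_good_reachable assms by blast
  then have "\<exists>c. adj r c \<and> (\<exists>w. adj c w \<and> w \<noteq> r)" unfolding good_root_def by blast
  then have hub: "adj r (hub r) \<and> (\<exists>w. adj (hub r) w \<and> w \<noteq> r)"
    unfolding hub_def by (rule someI_ex)
  then have "\<exists>w. adj (hub r) w \<and> w \<noteq> r" by blast
  then have child: "adj (hub r) (hub_child r) \<and> hub_child r \<noteq> r"
    unfolding hub_child_def by (rule someI_ex)
  have rV: "r \<in> V" using hub adj_in_V by blast
  show rr: "root r = r" unfolding r_def using root_root[OF assms(1)] .
  show d0: "depth r = 0" using depth_eq_0_iff[OF rV] rr by simp
  show "adj r (hub r)" using hub by blast
  show rh: "root (hub r) = r" using root_adj[of r "hub r"] hub rr by simp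
  show dh: "depth (hub r) = 1" using depth_adj[of r "hub r"] hub d0 by auto
  show "adj (hub r) (hub_child r)" "hub_child r \<noteq> r" using child by blast+
  show rc: "root (hub_child r) = r" using root_adj[of "hub r" "hub_child r"] child rh by simp
  have "depth (hub_child r) \<noteq> 0"
    using depth_eq_0_iff[of "hub_child r"] adj_in_V child rc by auto
  then show "depth (hub_child r) = 2" using depth_adj[of "hub r" "hub_child r"] child dh by auto
qed

definition only_hub_above :: "'a \<Rightarrow> bool" where
  "only_hub_above y \<longleftrightarrow>
     depth y = 2 \<and> (\<forall>u. adj u y \<longrightarrow> depth u = 1 \<longrightarrow> u = hub (root y))"

definition parent :: "'a \<Rightarrow> 'a" where
  "parent x = (if x = hub_child (root x) \<or> only_hub_above x then hub (root x)
              else SOME u. adj u x \<and> Suc (depth u) = depth x \<and> u \<noteq> hub (root x))"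

definition nonroot :: "'a \<Rightarrow> bool" where
  "nonroot x \<longleftrightarrow> x \<in> V \<and> 0 < depth x"

lemma hub_parent_candidate:
  assumes "nonroot x" and "x = hub_child (root x) \<or> only_hub_above x"
  shows "adj (hub (root x)) x" "depth x = 2"
proof -
  have xV: "x \<in> V" and pos: "0 < depth x" using assms(1) unfolding nonroot_def by auto
  note H = root_hub_facts[OF xV]
  show "depth x = 2" using assms(2) H unfolding only_hub_above_def by auto
  show "adj (hub (root x)) x"
  proof (cases "x = hub_child (root x)")
    case True
    then show ?thesis using H by simp
  next
    case False
    then have below: "only_hub_above x" using assms(2) by blast
    obtain u where u: "adj u x" "Suc (depth u) = depth x" using depth_pred xV pos by blast
    with below have "u = hub (root x)" unfolding only_hub_above_def by simp
    then show ?thesis using u by simp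
  qed
qed

lemma non_hub_parent_candidate:
  assumes "nonroot x" and "\<not> (x = hub_child (root x) \<or> only_hub_above x)"
  shows "\<exists>u. adj u x \<and> Suc (depth u) = depth x \<and> u \<noteq> hub (root x)"
proof (cases "depth x = 2")
  case True
  then show ?thesis using assms(2) unfolding only_hub_above_def by auto
next
  case False
  have xV: "x \<in> V" and pos: "0 < depth x" using assms(1) unfolding nonroot_def by auto
  obtain u where u: "adj u x" "Suc (depth u) = depth x" using depth_pred xV pos by blast
  moreover have "u \<noteq> hub (root x)" using u(2) False root_hub_facts[OF xV] by auto
  ultimately show ?thesis by blast
qed

lemma parent_facts:
  assumes "nonroot x"
  shows "adj (parent x) x" "Suc (depth (parent x)) = depth x"
    and "parent x = hub (root x) \<Longrightarrow> x = hub_child (root x) \<or> only_hub_above x"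
proof -
  have "adj (parent x) x \<and> Suc (depth (parent x)) = depth x \<and>
    (parent x = hub (root x) \<longrightarrow> x = hub_child (root x) \<or> only_hub_above x)"
  proof (cases "x = hub_child (root x) \<or> only_hub_above x")
    case True
    have "x \<in> V" using assms unfolding nonroot_def by blast
    then show ?thesis
      using True hub_parent_candidate[OF assms True] root_hub_facts by (simp add: parent_def)
  next
    case False
    have "parent x = (SOME u. adj u x \<and> Suc (depth u) = depth x \<and> u \<noteq> hub (root x))"
      unfolding parent_def by (rule if_not_P[OF False])
    then show ?thesis using someI_ex[OF non_hub_parent_candidate[OF assms False]] False by simp
  qed
  then show "adj (parent x) x" "Suc (depth (parent x)) = depth x"
    and "parent x = hub (root x) \<Longrightarrow> x = hub_child (root x) \<or> only_hub_above x"
    by blast+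
qed

lemma root_parent: "nonroot x \<Longrightarrow> root (parent x) = root x"
  using parent_facts(1) root_adj by blast

lemma parent_eq_root:
  assumes "nonroot x" and "depth x = 1"
  shows "parent x = root x"
proof -
  have "parent x \<in> V" "depth (parent x) = 0"
    using parent_facts[OF assms(1)] assms(2) adj_in_V by auto
  then show ?thesis using depth_eq_0_iff root_parent[OF assms(1)] by metis
qed

definition level_colour :: "nat \<Rightarrow> nat" where
  "level_colour n = (if 3 dvd n then 4 else n mod 3)"

lemma level_colour_range: "level_colour n \<in> {1..4}"
  unfolding level_colour_def by auto presburger

lemma level_colour_neq: "m < n \<Longrightarrow> n \<le> m + 2 \<Longrightarrow> level_colour n \<noteq> level_colour m"
  unfolding level_colour_def by (auto split: if_splits) presburger+

definition up_colour :: "'a \<Rightarrow> nat" where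
  "up_colour x =
    (if depth x = 1 then (if x = hub (root x) then 1 else 3)
     else if depth x = 2 then (if only_hub_above x \<and> x \<noteq> hub_child (root x) then 3 else 2)
     else level_colour (depth x))"

lemma up_colour_range: "up_colour x \<in> {1..4}"
  unfolding up_colour_def using level_colour_range by auto

lemma up_colour_adj_neq:
  assumes "adj x y" and "depth y = Suc (depth x)" and "0 < depth x"
  shows "up_colour y \<noteq> up_colour x"
proof -
  consider "depth x = 1" | "depth x = 2" | "3 \<le> depth x" using assms(3) by linarith
  then show ?thesis
  proof cases
    case 1
    show ?thesis
    proof (cases "x = hub (root x)")
      case True
      then show ?thesis using 1 assms(2) by (simp add: up_colour_def)
    next
      case False
      have "\<not> only_hub_above y"
        using assms(1) 1 False root_adj[OF assms(1)] unfolding only_hub_above_def by auto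
      then show ?thesis using 1 False assms(2) by (simp add: up_colour_def)
    qed
  next
    case 2
    then show ?thesis using assms(2) by (simp add: up_colour_def level_colour_def)
  next
    case 3
    then show ?thesis
      using assms(2) level_colour_neq[of "depth x" "depth y"] by (simp add: up_colour_def)
  qed
qed

lemma up_colour_two_levels_neq:
  assumes "depth z = depth x + 2" and "0 < depth x"
  shows "up_colour z \<noteq> up_colour x"
proof -
  consider "depth x = 1" | "depth x = 2" | "3 \<le> depth x" using assms(2) by linarith
  then show ?thesis
  proof cases
    case 3
    then show ?thesis
      using assms(1) level_colour_neq[of "depth x" "depth z"] by (simp add: up_colour_def)
  qed (use assms(1) in \<open>simp_all add: up_colour_def level_colour_def\<close>)
qed

definition tree_colouring :: "'a set \<Rightarrow> nat option" where
  "tree_colouring e = (if \<exists>x. nonroot x \<and> e = {x, parent x}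
                       then Some (up_colour (THE x. nonroot x \<and> e = {x, parent x})) else None)"

lemma tree_edge_in_F: "nonroot x \<Longrightarrow> {x, parent x} \<in> F"
  using parent_facts(1) unfolding adj_def by (simp add: insert_commute)

lemma tree_edge_inj:
  assumes "nonroot x" and "nonroot y" and "{x, parent x} = {y, parent y}"
  shows "x = y"
proof (rule ccontr)
  assume "x \<noteq> y"
  then have "y = parent x" "x = parent y" using assms(3) by (auto simp: doubleton_eq_iff)
  then show False using parent_facts(2)[OF assms(1)] parent_facts(2)[OF assms(2)] by simp
qed

lemma tree_colouring_tree_edge:
  assumes "nonroot x"
  shows "tree_colouring {x, parent x} = Some (up_colour x)"
proof -
  have "(THE y. nonroot y \<and> {x, parent x} = {y, parent y}) = x"
    using assms tree_edge_inj by (intro the_equality) auto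
  then show ?thesis unfolding tree_colouring_def using assms by auto
qed

lemma tree_colouring_eq_SomeD:
  assumes "tree_colouring e = Some k"
  shows "\<exists>x. nonroot x \<and> e = {x, parent x} \<and> k = up_colour x"
proof -
  obtain x where x: "nonroot x" "e = {x, parent x}"
    using assms unfolding tree_colouring_def by (auto split: if_splits)
  then show ?thesis using assms tree_colouring_tree_edge by auto
qed

lemma partial_edge_colouring_tree_colouring: "partial_edge_colouring F {1..4} tree_colouring"
  unfolding partial_edge_colouring_def using tree_colouring_eq_SomeD up_colour_range by blast

lemma satisfied_by_tree_edge:
  assumes "nonroot u" and "{u, parent u} \<inter> e \<noteq> {}" and "{u, parent u} \<noteq> e"
    and "\<And>v. nonroot v \<Longrightarrow> v \<noteq> u \<Longrightarrow> {v, parent v} \<inter> e \<noteq> {} \<Longrightarrow> up_colour v \<noteq> up_colour u"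
  shows "satisfied F tree_colouring e"
proof -
  have "{u, parent u} \<in> open_nbhd F e"
    using assms(1-3) tree_edge_in_F unfolding open_nbhd_def closed_nbhd_def by blast
  moreover have "tree_colouring e' \<noteq> Some (up_colour u)"
    if e': "e' \<in> closed_nbhd F e - {{u, parent u}}" for e'
  proof
    assume "tree_colouring e' = Some (up_colour u)"
    then obtain v where v: "nonroot v" "e' = {v, parent v}" "up_colour u = up_colour v"
      using tree_colouring_eq_SomeD by blast
    have "v \<noteq> u" "{v, parent v} \<inter> e \<noteq> {}" using e' v(2) unfolding closed_nbhd_def by auto
    then show False using assms(4)[OF v(1)] v(3) by simp
  qed
  ultimately show ?thesis
    unfolding satisfied_def unique_colour_for_def
    using tree_colouring_tree_edge[OF assms(1)] by blast
qed

lemma incident_unique_by_tree_edge: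
  assumes "nonroot u" and "x \<in> {u, parent u}"
    and "\<And>v. nonroot v \<Longrightarrow> v \<noteq> u \<Longrightarrow> x \<in> {v, parent v} \<Longrightarrow> up_colour v \<noteq> up_colour u"
  shows "incident_unique F tree_colouring x"
proof -
  have "tree_colouring e' \<noteq> tree_colouring {u, parent u}"
    if e': "e' \<in> F" "x \<in> e'" "e' \<noteq> {u, parent u}" for e'
  proof
    assume "tree_colouring e' = tree_colouring {u, parent u}"
    then obtain v where v: "nonroot v" "e' = {v, parent v}" "up_colour u = up_colour v"
      using tree_colouring_eq_SomeD tree_colouring_tree_edge[OF assms(1)] by force
    have "v \<noteq> u" "x \<in> {v, parent v}" using e' v(2) by auto
    then show False using assms(3)[OF v(1)] v(3) by simp
  qed
  moreover have "{u, parent u} \<in> F" "tree_colouring {u, parent u} \<noteq> None"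
    using tree_edge_in_F tree_colouring_tree_edge assms(1) by auto
  ultimately show ?thesis unfolding incident_unique_def using assms(2) by blast
qed

lemma incident_unique_tree_colouring:
  assumes xV: "x \<in> V"
  shows "incident_unique F tree_colouring x"
proof (cases "depth x = 0")
  case False
  then have x: "nonroot x" using xV unfolding nonroot_def by simp
  show ?thesis
  proof (rule incident_unique_by_tree_edge[OF x])
    fix v assume v: "nonroot v" "v \<noteq> x" "x \<in> {v, parent v}"
    then have "parent v = x" by blast
    then show "up_colour v \<noteq> up_colour x"
      using parent_facts[OF v(1)] up_colour_adj_neq False by auto
  qed simp
next
  case True
  let ?r = "root x" and ?h = "hub (root x)"
  note H = root_hub_facts[OF xV]
  have xr: "x = ?r" using depth_eq_0_iff xV True by blast
  have h: "nonroot ?h" using H adj_in_V unfolding nonroot_def by auto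
  have ph: "parent ?h = ?r" using parent_eq_root[OF h] H by simp
  show ?thesis
  proof (rule incident_unique_by_tree_edge[OF h])
    show "x \<in> {?h, parent ?h}" using ph xr by simp
    fix v assume v: "nonroot v" "v \<noteq> ?h" "x \<in> {v, parent v}"
    have "v \<noteq> x" using v(1) True unfolding nonroot_def by auto
    then have "parent v = ?r" using v(3) xr by auto
    then have "depth v = 1" "root v = ?r"
      using parent_facts(2)[OF v(1)] H root_parent[OF v(1)] by auto
    then show "up_colour v \<noteq> up_colour ?h" using v(2) H by (simp add: up_colour_def)
  qed
qed

lemma satisfied_deep_edge:
  assumes xy: "adj x y" and dy: "depth y = Suc (depth x)" and pos: "0 < depth x"
  shows "satisfied F tree_colouring {x, y}"
proof -
  have x: "nonroot x" using xy pos adj_in_V unfolding nonroot_def by blast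
  have "parent x \<noteq> y" using parent_facts(2)[OF x] dy by auto
  then have "{x, parent x} \<noteq> {x, y}" using adj_neq[OF xy] by (auto simp: doubleton_eq_iff)
  then show ?thesis
  proof (rule satisfied_by_tree_edge[OF x, rotated])
    fix v assume v: "nonroot v" "v \<noteq> x" "{v, parent v} \<inter> {x, y} \<noteq> {}"
    then consider "v = y" | "parent v = x" | "parent v = y" by blast
    then show "up_colour v \<noteq> up_colour x"
    proof cases
      case 1
      then show ?thesis using up_colour_adj_neq xy dy pos by blast
    next
      case 2
      then show ?thesis using up_colour_adj_neq parent_facts[OF v(1)] pos by auto
    next
      case 3
      then show ?thesis using up_colour_two_levels_neq parent_facts(2)[OF v(1)] dy pos by auto
    qed
  qed simp
qed

lemma satisfied_hub_edge:
  assumes rV: "r \<in> V" and r0: "depth r = 0"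
  shows "satisfied F tree_colouring {r, hub r}"
proof -
  have rr: "root r = r" using depth_eq_0_iff rV r0 by simp
  note H = root_hub_facts[OF rV, unfolded rr]
  let ?h = "hub r" and ?w = "hub_child r"
  have w: "nonroot ?w" using H adj_in_V unfolding nonroot_def by auto
  have pw: "parent ?w = ?h" using H unfolding parent_def by simp
  have cw: "up_colour ?w = 2" using H by (simp add: up_colour_def)
  have "?w \<noteq> ?h" using adj_neq H by metis
  then have "{?w, parent ?w} \<noteq> {r, ?h}" using pw H by (auto simp: doubleton_eq_iff)
  then show ?thesis
  proof (rule satisfied_by_tree_edge[OF w, rotated])
    show "{?w, parent ?w} \<inter> {r, ?h} \<noteq> {}" using pw by simp
    fix v assume v: "nonroot v" "v \<noteq> ?w" "{v, parent v} \<inter> {r, ?h} \<noteq> {}"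
    have "v \<noteq> r" using v(1) r0 unfolding nonroot_def by auto
    then consider "v = ?h" | "parent v = r" | "parent v = ?h" using v(3) by blast
    then show "up_colour v \<noteq> up_colour ?w"
    proof cases
      case 1
      then show ?thesis using H cw by (simp add: up_colour_def)
    next
      case 2
      then have "depth v = 1" using parent_facts(2)[OF v(1)] r0 by simp
      then show ?thesis using cw by (simp add: up_colour_def)
    next
      case 3
      then have "depth v = 2" "root v = r"
        using parent_facts(2)[OF v(1)] root_parent[OF v(1)] H by auto
      moreover have "only_hub_above v"
        using parent_facts(3)[OF v(1)] 3 v(2) \<open>root v = r\<close> by auto
      ultimately show ?thesis using v(2) cw by (simp add: up_colour_def)
    qed
  qed
qed

lemma satisfied_root_edge:
  assumes ry: "adj r y" and r0: "depth r = 0" and yh: "y \<noteq> hub r"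
  shows "satisfied F tree_colouring {r, y}"
proof -
  have rV: "r \<in> V" using ry adj_in_V by blast
  have rr: "root r = r" using depth_eq_0_iff rV r0 by simp
  note H = root_hub_facts[OF rV, unfolded rr]
  let ?h = "hub r"
  have h: "nonroot ?h" using H adj_in_V unfolding nonroot_def by auto
  have ph: "parent ?h = r" using parent_eq_root[OF h] H by simp
  have ch: "up_colour ?h = 1" using H by (simp add: up_colour_def)
  have "{?h, parent ?h} \<noteq> {r, y}" using ph yh by (auto simp: doubleton_eq_iff)
  then show ?thesis
  proof (rule satisfied_by_tree_edge[OF h, rotated])
    show "{?h, parent ?h} \<inter> {r, y} \<noteq> {}" using ph by simp
    have dy: "depth y = 1" and ryr: "root y = r"
      using depth_adj[OF ry] r0 root_adj[OF ry] rr by auto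
    fix v assume v: "nonroot v" "v \<noteq> ?h" "{v, parent v} \<inter> {r, y} \<noteq> {}"
    have "v \<noteq> r" using v(1) r0 unfolding nonroot_def by auto
    then consider "v = y" | "parent v = r" | "parent v = y" using v(3) by blast
    then show "up_colour v \<noteq> up_colour ?h"
    proof cases
      case 1
      then show ?thesis using dy ryr yh ch by (simp add: up_colour_def)
    next
      case 2
      then have "depth v = 1" "root v = r"
        using parent_facts(2)[OF v(1)] root_parent[OF v(1)] r0 rr by auto
      then show ?thesis using v(2) ch by (simp add: up_colour_def)
    next
      case 3
      then have "depth v = 2" using parent_facts(2)[OF v(1)] dy by simp
      then show ?thesis using ch by (simp add: up_colour_def)
    qed
  qed
qed

lemma satisfied_tree_colouring:
  assumes "e \<in> F"
  shows "satisfied F tree_colouring e"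
proof -
  have downward: "satisfied F tree_colouring {x, y}"
    if xy: "adj x y" and "depth y = Suc (depth x)" for x y
  proof (cases "depth x = 0")
    case True
    then show ?thesis
      using satisfied_hub_edge satisfied_root_edge xy adj_in_V by (cases "y = hub x") auto
  next
    case False
    then show ?thesis using satisfied_deep_edge that by simp
  qed
  obtain x y where e: "e = {x, y}" and xy: "adj x y" using edge_adj assms by blast
  consider "depth y = Suc (depth x)" | "depth x = Suc (depth y)" using depth_adj[OF xy] by blast
  then show ?thesis
  proof cases
    case 1
    then show ?thesis using downward xy e by simp
  next
    case 2
    then show ?thesis using downward[OF adj_sym[OF xy]] e by (simp add: insert_commute)
  qed
qed

end

theorem mainTheorem7:
  fixes V :: "'a set" and F :: "'a set set"
  assumes "simple_graph V F"
    and "bipartite V F"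
    and "\<not> has_single_edge_component F"
    and "\<forall>v\<in>V. \<exists>e\<in>F. v \<in> e"
  shows "\<exists>col :: 'a set \<Rightarrow> nat option.
           partial_edge_colouring F {1..4} col \<and>
           (\<forall>e\<in>F. satisfied F col e) \<and>
           (\<forall>v\<in>V. incident_unique F col v)"
proof -
  obtain A B where "\<forall>e\<in>F. card (e \<inter> A) = 1 \<and> card (e \<inter> B) = 1"
    using assms(2) unfolding bipartite_def by blast
  then interpret bipartite_graph_without_K2 V F A
    using assms(1,3,4) unfolding simple_graph_def by unfold_locales auto
  show ?thesis
    using partial_edge_colouring_tree_colouring satisfied_tree_colouring
      incident_unique_tree_colouring by blast
qed

end
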